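(* Let $G$ be a simple undirected graph and let $G'$ be any subgraph of $G$. Then $\rho(M_G(s))\geq \rho(M_{G'}(s))$ for all $s\in(-\infty,0]\cup[1,+\infty)$.
   Context: For a simple undirected graph $G$ on $n$ vertices with adjacency matrix $A$, diagonal degree matrix $D$ and $n\times n$ identity matrix $I$, and a real parameter $s$, the deformed Laplacian matrix of $G$ is $M_G(s)=I-sA+s^2(D-I)$ (for a subgraph $G'$, $M_{G'}(s)$ is formed with the adjacency and degree matrices of $G'$ itself). For a real symmetric matrix $B$, $\rho(B)$ denotes its spectral radius, i.e. its largest eigenvalue $\sup_{|x|=1}\langle x,Bx\rangle$. *)

theory Defs
  imports Main "HOL-Analysis.Analysis"
begin

definition simple_graph :: "'a set \<Rightarrow> ('a \<Rightarrow> 'a \<Rightarrow> bool) \<Rightarrow> bool" where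
  "simple_graph V E \<longleftrightarrow> finite V \<and>
     (\<forall>i j. E i j \<longrightarrow> i \<in> V \<and> j \<in> V \<and> i \<noteq> j) \<and>
     (\<forall>i j. E i j \<longrightarrow> E j i)"

definition subgraph :: "'a set \<Rightarrow> ('a \<Rightarrow> 'a \<Rightarrow> bool) \<Rightarrow> 'a set \<Rightarrow> ('a \<Rightarrow> 'a \<Rightarrow> bool) \<Rightarrow> bool" where
  "subgraph V' E' V E \<longleftrightarrow> simple_graph V' E' \<and> V' \<subseteq> V \<and> (\<forall>i j. E' i j \<longrightarrow> E i j)"

text \<open>Matrices indexed by the vertex set V are functions 'a => 'a => real (only entries on V x V matter).\<close>
definition adj_mat :: "('a \<Rightarrow> 'a \<Rightarrow> bool) \<Rightarrow> 'a \<Rightarrow> 'a \<Rightarrow> real" where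
  "adj_mat E i j = (if E i j then 1 else 0)"

definition degree :: "'a set \<Rightarrow> ('a \<Rightarrow> 'a \<Rightarrow> bool) \<Rightarrow> 'a \<Rightarrow> nat" where
  "degree V E i = card {j \<in> V. E i j}"

definition deg_mat :: "'a set \<Rightarrow> ('a \<Rightarrow> 'a \<Rightarrow> bool) \<Rightarrow> 'a \<Rightarrow> 'a \<Rightarrow> real" where
  "deg_mat V E i j = (if i = j then real (degree V E i) else 0)"

definition id_mat :: "'a \<Rightarrow> 'a \<Rightarrow> real" where
  "id_mat i j = (if i = j then 1 else 0)"

definition deformed_laplacian :: "'a set \<Rightarrow> ('a \<Rightarrow> 'a \<Rightarrow> bool) \<Rightarrow> real \<Rightarrow> 'a \<Rightarrow> 'a \<Rightarrow> real" where
  "deformed_laplacian V E s i j =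
     id_mat i j - s * adj_mat E i j + s\<^sup>2 * (deg_mat V E i j - id_mat i j)"

text \<open>rho(B) for a real symmetric matrix indexed by V: its largest eigenvalue,
  sup over unit vectors x (supported on V) of <x, Bx>.\<close>
definition rho :: "'a set \<Rightarrow> ('a \<Rightarrow> 'a \<Rightarrow> real) \<Rightarrow> real" where
  "rho V B = Sup {(\<Sum>i\<in>V. \<Sum>j\<in>V. x i * B i j * x j) | x :: 'a \<Rightarrow> real.
                    (\<Sum>i\<in>V. (x i)\<^sup>2) = 1}"

end

theory Submission
  imports Defs
begin

(* For every vector x,
     x^T M_G(s) x = (1 - s^2) |x|^2 + sum over ordered adjacent pairs (i, j) of
                    s^2 (x_i^2 + x_j^2) / 2 - s x_i x_j.
   For s >= 1 each pair term is nonnegative by AM-GM; for s <= 0 it is nonnegative as soon as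
   x_i x_j >= 0 and it does not decrease when x is replaced by |x|.  So a unit test vector of G'
   (replaced by its absolute value when s <= 0), extended by zero to V, is a unit test vector of G
   whose form only gains the nonnegative terms of the edges of G missing from G'. *)

definition quad_form :: "'a set \<Rightarrow> ('a \<Rightarrow> 'a \<Rightarrow> real) \<Rightarrow> ('a \<Rightarrow> real) \<Rightarrow> real" where
  "quad_form V B x = (\<Sum>i\<in>V. \<Sum>j\<in>V. x i * B i j * x j)"

definition edge_form :: "real \<Rightarrow> real \<Rightarrow> real \<Rightarrow> real" where
  "edge_form s a b = s\<^sup>2 * (a\<^sup>2 + b\<^sup>2) / 2 - s * a * b"

definition edge_sum :: "'a set \<Rightarrow> ('a \<Rightarrow> 'a \<Rightarrow> bool) \<Rightarrow> real \<Rightarrow> ('a \<Rightarrow> real) \<Rightarrow> real" where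
  "edge_sum V E s x = (\<Sum>i\<in>V. \<Sum>j\<in>V. if E i j then edge_form s (x i) (x j) else 0)"

lemma edge_form_nonneg:
  assumes "s \<ge> 1 \<or> (s \<le> 0 \<and> a * b \<ge> 0)"
  shows "edge_form s a b \<ge> 0"
  using assms
proof
  assume s: "s \<ge> 1"
  have "2 * a * b \<le> a\<^sup>2 + b\<^sup>2"
    by (rule sum_squares_bound)
  then have "s * (2 * a * b) \<le> s * (a\<^sup>2 + b\<^sup>2)"
    using s by (intro mult_left_mono) auto
  also have "\<dots> \<le> s\<^sup>2 * (a\<^sup>2 + b\<^sup>2)"
    using s by (intro mult_right_mono) (auto simp: power2_eq_square)
  finally show ?thesis
    by (simp add: edge_form_def algebra_simps)
next
  assume "s \<le> 0 \<and> a * b \<ge> 0"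
  then have "s * (a * b) \<le> 0"
    by (simp add: mult_nonpos_nonneg)
  moreover have "s\<^sup>2 * (a\<^sup>2 + b\<^sup>2) / 2 \<ge> 0"
    by simp
  ultimately show ?thesis
    by (unfold edge_form_def mult.assoc) linarith
qed

lemma edge_form_le_abs:
  assumes "s \<le> 0"
  shows "edge_form s a b \<le> edge_form s \<bar>a\<bar> \<bar>b\<bar>"
proof -
  have "-s * (a * b) \<le> -s * (\<bar>a\<bar> * \<bar>b\<bar>)"
    using assms by (intro mult_left_mono) (auto simp: abs_mult[symmetric])
  then show ?thesis
    by (simp add: edge_form_def power2_abs mult.assoc)
qed

lemma edge_sum_mono_subgraph:
  assumes "finite V" "V' \<subseteq> V" "\<And>i j. E' i j \<Longrightarrow> E i j"
    and nonneg: "\<And>i j. edge_form s (x i) (x j) \<ge> 0"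
  shows "edge_sum V' E' s x \<le> edge_sum V E s x"
proof -
  have "edge_sum V' E' s x \<le> (\<Sum>i\<in>V'. \<Sum>j\<in>V'. if E i j then edge_form s (x i) (x j) else 0)"
    unfolding edge_sum_def by (intro sum_mono) (auto simp: nonneg assms(3))
  also have "\<dots> \<le> (\<Sum>i\<in>V'. \<Sum>j\<in>V. if E i j then edge_form s (x i) (x j) else 0)"
    using assms(1,2) by (intro sum_mono sum_mono2) (auto simp: nonneg)
  also have "\<dots> \<le> edge_sum V E s x"
    unfolding edge_sum_def using assms(1,2) by (intro sum_mono2 sum_nonneg) (auto simp: nonneg)
  finally show ?thesis .
qed

lemma quad_form_deformed_laplacian:
  assumes fin: "finite V" and sym: "\<And>i j. E i j \<Longrightarrow> E j i"
  shows "quad_form V (deformed_laplacian V E s) x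
           = (1 - s\<^sup>2) * (\<Sum>i\<in>V. (x i)\<^sup>2) + edge_sum V E s x"
proof -
  define P where "P i j = (if E i j then (x i)\<^sup>2 else 0)" for i j
  have degree_sum: "real (degree V E i) * (x i)\<^sup>2 = (\<Sum>j\<in>V. P i j)" for i
    using sum.inter_filter[OF fin, of "\<lambda>_. (x i)\<^sup>2" "E i"]
    by (simp add: P_def degree_def if_distrib)
  have row: "(\<Sum>j\<in>V. x i * deformed_laplacian V E s i j * x j)
      = (1 - s\<^sup>2) * (x i)\<^sup>2 + s\<^sup>2 * (\<Sum>j\<in>V. P i j) - s * (\<Sum>j\<in>V. x i * adj_mat E i j * x j)"
    if "i \<in> V" for i
  proof -
    have "(\<Sum>j\<in>V. x i * deformed_laplacian V E s i j * x j)
        = (\<Sum>j\<in>V. (if i = j then (1 - s\<^sup>2 + s\<^sup>2 * real (degree V E i)) * (x i)\<^sup>2 else 0)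
                    - s * (x i * adj_mat E i j * x j))"
      by (intro sum.cong refl)
        (simp add: deformed_laplacian_def id_mat_def deg_mat_def power2_eq_square algebra_simps)
    then show ?thesis
      using fin that by (simp add: sum_subtractf sum_distrib_left degree_sum algebra_simps)
  qed
  have P_swap: "(\<Sum>i\<in>V. \<Sum>j\<in>V. P j i) = (\<Sum>i\<in>V. \<Sum>j\<in>V. P i j)"
    using sym by (subst sum.swap) (auto simp: P_def intro!: sum.cong)
  have "edge_sum V E s x
      = s\<^sup>2 / 2 * ((\<Sum>i\<in>V. \<Sum>j\<in>V. P i j) + (\<Sum>i\<in>V. \<Sum>j\<in>V. P j i))
        - s * (\<Sum>i\<in>V. \<Sum>j\<in>V. x i * adj_mat E i j * x j)"
  proof -
    have pair: "(if E i j then edge_form s (x i) (x j) else 0)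
        = s\<^sup>2 / 2 * P i j + s\<^sup>2 / 2 * P j i - s * (x i * adj_mat E i j * x j)" for i j
      using sym[of i j] sym[of j i] by (auto simp: P_def edge_form_def adj_mat_def algebra_simps)
    show ?thesis
      unfolding edge_sum_def pair sum.distrib sum_subtractf sum_distrib_left[symmetric]
      by (simp add: algebra_simps)
  qed
  moreover have "quad_form V (deformed_laplacian V E s) x
      = (1 - s\<^sup>2) * (\<Sum>i\<in>V. (x i)\<^sup>2) + s\<^sup>2 * (\<Sum>i\<in>V. \<Sum>j\<in>V. P i j)
        - s * (\<Sum>i\<in>V. \<Sum>j\<in>V. x i * adj_mat E i j * x j)"
    unfolding quad_form_def using row
    by (simp add: sum.distrib sum_subtractf sum_distrib_left cong: sum.cong)
  ultimately show ?thesis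
    using P_swap by (simp add: algebra_simps)
qed

lemma unit_vector_entry_abs_le_1:
  assumes "finite V" "(\<Sum>i\<in>V. (x i)\<^sup>2) = (1::real)" "i \<in> V"
  shows "\<bar>x i\<bar> \<le> 1"
proof -
  have "(x i)\<^sup>2 \<le> (\<Sum>i\<in>V. (x i)\<^sup>2)"
    using assms by (intro member_le_sum) auto
  then show ?thesis
    using assms(2) by (simp add: abs_square_le_1)
qed

lemma rho_eq_SUP_quad_form:
  "rho V B = (SUP x \<in> {x. (\<Sum>i\<in>V. (x i)\<^sup>2) = 1}. quad_form V B x)"
  unfolding rho_def quad_form_def by (simp add: setcompr_eq_image)

lemma quad_form_le_rho:
  assumes fin: "finite V" and unit: "(\<Sum>i\<in>V. (x i)\<^sup>2) = 1"
  shows "quad_form V B x \<le> rho V B"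
  unfolding rho_eq_SUP_quad_form
proof (rule cSUP_upper)
  show "x \<in> {x. (\<Sum>i\<in>V. (x i)\<^sup>2) = 1}"
    using unit by simp
  have "quad_form V B y \<le> (\<Sum>i\<in>V. \<Sum>j\<in>V. \<bar>B i j\<bar>)"
    if "(\<Sum>i\<in>V. (y i)\<^sup>2) = 1" for y
    unfolding quad_form_def
  proof (intro sum_mono)
    fix i j assume "i \<in> V" "j \<in> V"
    then have "\<bar>y i\<bar> \<le> 1" "\<bar>y j\<bar> \<le> 1"
      using unit_vector_entry_abs_le_1[OF fin that] by auto
    then have "\<bar>y i * B i j * y j\<bar> \<le> 1 * \<bar>B i j\<bar> * 1"
      unfolding abs_mult by (intro mult_mono) auto
    then show "y i * B i j * y j \<le> \<bar>B i j\<bar>"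
      using abs_ge_self[of "y i * B i j * y j"] by linarith
  qed
  then show "bdd_above (quad_form V B ` {x. (\<Sum>i\<in>V. (x i)\<^sup>2) = 1})"
    by (intro bdd_aboveI2[where M = "\<Sum>i\<in>V. \<Sum>j\<in>V. \<bar>B i j\<bar>"]) blast
qed

lemma rho_le:
  assumes "finite V" "V \<noteq> {}"
    and bound: "\<And>x. (\<Sum>i\<in>V. (x i)\<^sup>2) = 1 \<Longrightarrow> quad_form V B x \<le> c"
  shows "rho V B \<le> c"
  unfolding rho_eq_SUP_quad_form
proof (rule cSUP_least)
  obtain v where "v \<in> V"
    using assms(2) by blast
  define e :: "'a \<Rightarrow> real" where "e i = (if i = v then 1 else 0)" for i
  have "(\<Sum>i\<in>V. (e i)\<^sup>2) = (\<Sum>i\<in>V. e i)"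
    by (intro sum.cong) (auto simp: e_def)
  also have "\<dots> = 1"
    using assms(1) \<open>v \<in> V\<close> by (simp add: e_def)
  finally have "e \<in> {x. (\<Sum>i\<in>V. (x i)\<^sup>2) = 1}"
    by simp
  then show "{x :: 'a \<Rightarrow> real. (\<Sum>i\<in>V. (x i)\<^sup>2) = 1} \<noteq> {}"
    by blast
next
  show "quad_form V B x \<le> c" if "x \<in> {x. (\<Sum>i\<in>V. (x i)\<^sup>2) = 1}" for x
    using that by (intro bound) simp
qed

lemma deformed_laplacian_form_le_supergraph:
  assumes "simple_graph V E" "subgraph V' E' V E" "s \<le> 0 \<or> s \<ge> 1"
  obtains y where "(\<Sum>i\<in>V. (y i)\<^sup>2) = (\<Sum>i\<in>V'. (x i)\<^sup>2)"
    and "quad_form V' (deformed_laplacian V' E' s) x \<le> quad_form V (deformed_laplacian V E s) y"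
proof -
  have fin: "finite V" "finite V'" and sym: "\<And>i j. E i j \<Longrightarrow> E j i" "\<And>i j. E' i j \<Longrightarrow> E' j i"
    and sub: "V' \<subseteq> V" "\<And>i j. E' i j \<Longrightarrow> E i j"
    using assms(1,2) by (auto simp: simple_graph_def subgraph_def)
  define y where "y i = (if i \<in> V' then if s \<le> 0 then \<bar>x i\<bar> else x i else 0)" for i
  have norm: "(\<Sum>i\<in>V. (y i)\<^sup>2) = (\<Sum>i\<in>V'. (x i)\<^sup>2)"
  proof -
    have "(\<Sum>i\<in>V. (y i)\<^sup>2) = (\<Sum>i\<in>V'. (y i)\<^sup>2)"
      using fin sub by (intro sum.mono_neutral_right) (auto simp: y_def)
    also have "\<dots> = (\<Sum>i\<in>V'. (x i)\<^sup>2)"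
      by (intro sum.cong refl) (simp add: y_def power2_abs)
    finally show ?thesis .
  qed
  have y_nonneg: "edge_form s (y i) (y j) \<ge> 0" for i j
    using assms(3) by (intro edge_form_nonneg) (auto simp: y_def)
  have "edge_sum V' E' s x \<le> edge_sum V' E' s y"
    unfolding edge_sum_def using edge_form_le_abs[of s]
    by (intro sum_mono) (auto simp: y_def)
  also have "\<dots> \<le> edge_sum V E s y"
    using fin(1) sub y_nonneg by (rule edge_sum_mono_subgraph)
  finally show ?thesis
    using that norm by (simp add: quad_form_deformed_laplacian fin sym)
qed

theorem corollary3p5:
  fixes V V' :: "'a set" and E E' :: "'a \<Rightarrow> 'a \<Rightarrow> bool" and s :: real
  assumes "simple_graph V E"
    and "subgraph V' E' V E"
    and "V' \<noteq> {}"
    and "s \<le> 0 \<or> s \<ge> 1"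
  shows "rho V (deformed_laplacian V E s) \<ge> rho V' (deformed_laplacian V' E' s)"
proof -
  have fin: "finite V" "finite V'"
    using assms(1,2) by (auto simp: simple_graph_def subgraph_def)
  show ?thesis
  proof (rule rho_le[OF fin(2) assms(3)])
    fix x :: "'a \<Rightarrow> real"
    assume unit: "(\<Sum>i\<in>V'. (x i)\<^sup>2) = 1"
    obtain y where norm: "(\<Sum>i\<in>V. (y i)\<^sup>2) = (\<Sum>i\<in>V'. (x i)\<^sup>2)"
      and le: "quad_form V' (deformed_laplacian V' E' s) x \<le> quad_form V (deformed_laplacian V E s) y"
      by (rule deformed_laplacian_form_le_supergraph[OF assms(1,2,4)])
    have "quad_form V (deformed_laplacian V E s) y \<le> rho V (deformed_laplacian V E s)"
      using fin(1) norm unit by (intro quad_form_le_rho) simp_all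
    with le show "quad_form V' (deformed_laplacian V' E' s) x \<le> rho V (deformed_laplacian V E s)"
      by (rule order_trans)
  qed
qed

end
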